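(* Let $\psi\in\mathcal{B}_b(\mathbb{R}^2)$ be a bounded Borel function and $T>0$. Then for each $0<t<T$ there exists $C_{T,\psi}$ such that for each $x\in\mathbb{R}^2$ $$\sup_{0<\varepsilon<\frac12}\Big|\frac{-1}{\log\varepsilon}\int_{\mathbb{R}^2}\mathrm{d}z\int_0^t\mathrm{d}s\,\frac{1}{s+\varepsilon}p_{\frac{s+2\varepsilon}{2}}(z-x)\psi(z)\Big|\le C_{T,\psi},$$ and, for $0<t\le T$, $$\lim_{\varepsilon\to0}\frac{-1}{\log\varepsilon}\int_{\mathbb{R}^2}\mathrm{d}z\int_0^t\mathrm{d}s\,\frac{1}{s+\varepsilon}p_{\frac{s+\varepsilon}{2}}(z-x)\psi(z)=\psi(x)\quad\text{for a.e. }x\in\mathbb{R}^2.$$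
   Context: $p_t(x)=\frac{1}{2\pi t}\exp(-\frac{|x|^2}{2t})$ for $t>0$, $x\in\mathbb{R}^2$. *)

theory Defs
  imports "HOL-Analysis.Analysis"
begin

definition heat_kernel :: "real \<Rightarrow> real^2 \<Rightarrow> real" where
  "heat_kernel t x = 1 / (2 * pi * t) * exp (- (norm x)\<^sup>2 / (2 * t))"

end

(*
  By Fubini the double integral equals the time integral of P_r psi (x) ds / (s + eps), where
  P_r psi (x) = int p_r (z - x) psi z dz is the heat semigroup, bounded by sup |psi|. Since
  int_0^t ds / (s + eps) = ln (t + eps) - ln eps behaves like - ln eps, the normalised integral is
  a weighted mean of P_r psi (x): it is bounded, and as eps -> 0 the weight concentrates at s = 0,
  so it tends to the limit of P_r psi (x) as r -> 0 whenever that limit exists.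

  That limit is psi x at every Lebesgue point x of psi, hence almost everywhere. Cutting the
  Gaussian into the annuli k sqrt r <= |z - x| < (k + 1) sqrt r, each inside the cube of half-side
  (k + 1) sqrt r around x, bounds int p_r (z - x) |psi z - psi x| dz by
  sum_k w_k Phi ((k + 1) sqrt r) / ((k + 1) sqrt r)^2 with summable Gaussian weights w_k, where
  Phi h is the integral of |psi - psi x| over the cube of half-side h; Tannery's theorem then lets
  r -> 0 termwise. Lebesgue differentiation is available for corner cubes [x, x + h] only; a
  centred cube is covered by the corner cubes obtained by reflecting coordinates, and these
  reflections preserve Lebesgue measure.
*)
theory Submission
  imports Defs "HOL-Probability.Probability" "HOL-Real_Asymp.Real_Asymp"
begin

section \<open>Heat kernel and heat semigroup\<close>

lemma heat_kernel_nonneg: "0 \<le> r \<Longrightarrow> 0 \<le> heat_kernel r x"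
  by (simp add: heat_kernel_def)

lemma borel_measurable_heat_kernel [measurable (raw)]:
  assumes [measurable]: "f \<in> borel_measurable M" "g \<in> M \<rightarrow>\<^sub>M borel"
  shows "(\<lambda>w. heat_kernel (f w) (g w)) \<in> borel_measurable M"
  unfolding heat_kernel_def by measurable

lemma heat_kernel_eq_prod_normal_density:
  fixes f :: "real^2 \<Rightarrow> real"
  assumes "r > 0"
  shows "heat_kernel r (\<Sum>b\<in>Basis. f b *\<^sub>R b) = (\<Prod>b\<in>Basis. normal_density 0 (sqrt r) (f b))"
proof -
  have norm_sq: "(norm (\<Sum>b\<in>Basis. f b *\<^sub>R b))\<^sup>2 = (\<Sum>b\<in>(Basis::(real^2) set). (f b)\<^sup>2)"
    unfolding power2_norm_eq_inner
    by (subst euclidean_inner) (simp add: inner_sum_left_Basis power2_eq_square)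
  have "(\<Prod>b\<in>(Basis::(real^2) set). normal_density 0 (sqrt r) (f b))
      = (\<Prod>b\<in>(Basis::(real^2) set). 1 / sqrt (2 * pi * r) * exp (- (f b)\<^sup>2 / (2 * r)))"
    using assms by (simp add: normal_density_def)
  also have "\<dots> = (1 / sqrt (2 * pi * r)) ^ card (Basis::(real^2) set) * (\<Prod>b\<in>(Basis::(real^2) set). exp (- (f b)\<^sup>2 / (2 * r)))"
    by (simp only: prod.distrib prod_constant)
  also have "\<dots> = 1 / (2 * pi * r) * exp (- (\<Sum>b\<in>(Basis::(real^2) set). (f b)\<^sup>2) / (2 * r))"
    using assms by (simp add: power_divide sum_divide_distrib sum_negf flip: exp_sum)
  finally show ?thesis
    by (simp add: heat_kernel_def norm_sq)
qed

lemma nn_integral_heat_kernel: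
  assumes "r > 0"
  shows "(\<integral>\<^sup>+z. ennreal (heat_kernel r (z - x)) \<partial>lborel) = 1"
proof -
  have normal: "(\<integral>\<^sup>+y. ennreal (normal_density 0 (sqrt r) y) \<partial>lborel) = 1"
    using assms by (subst nn_integral_eq_integral) (auto intro!: integrable_normal_density integral_normal_density)
  have "(\<integral>\<^sup>+z. ennreal (heat_kernel r (z - x)) \<partial>lborel)
      = (\<integral>\<^sup>+z. ennreal (heat_kernel r (z - x)) \<partial>distr lborel borel ((+) x))"
    by (simp add: lborel_distr_plus)
  also have "\<dots> = (\<integral>\<^sup>+y. ennreal (heat_kernel r y) \<partial>lborel)"
    by (subst nn_integral_distr) auto
  also have "\<dots> = (\<integral>\<^sup>+y. ennreal (heat_kernel r y) \<partial>distr (\<Pi>\<^sub>M b\<in>Basis. lborel) borel (\<lambda>f. \<Sum>b\<in>Basis. f b *\<^sub>R b))"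
    by (subst lborel_eq) simp
  also have "\<dots> = (\<integral>\<^sup>+f. (\<Prod>b\<in>Basis. ennreal (normal_density 0 (sqrt r) (f b))) \<partial>(\<Pi>\<^sub>M b\<in>(Basis::(real^2) set). lborel))"
    using assms by (subst nn_integral_distr) (auto simp: heat_kernel_eq_prod_normal_density prod_ennreal)
  also have "\<dots> = (\<Prod>b\<in>(Basis::(real^2) set). (\<integral>\<^sup>+y. ennreal (normal_density 0 (sqrt r) y) \<partial>lborel))"
    by (rule product_sigma_finite.product_nn_integral_prod) (auto simp: product_sigma_finite_def sigma_finite_lborel)
  finally show ?thesis
    by (simp add: normal)
qed

lemma integrable_heat_kernel: "r > 0 \<Longrightarrow> integrable lborel (\<lambda>z. heat_kernel r (z - x))"
  by (rule integrableI_nonneg) (auto simp: heat_kernel_nonneg nn_integral_heat_kernel)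

lemma integral_heat_kernel: "r > 0 \<Longrightarrow> (\<integral>z. heat_kernel r (z - x) \<partial>lborel) = 1"
  using nn_integral_eq_integral[OF integrable_heat_kernel, of r x]
  by (simp add: heat_kernel_nonneg nn_integral_heat_kernel)

definition heat_semigroup :: "real \<Rightarrow> (real^2 \<Rightarrow> real) \<Rightarrow> real^2 \<Rightarrow> real" where
  "heat_semigroup r g x = (\<integral>z. heat_kernel r (z - x) * g z \<partial>lborel)"

lemma borel_measurable_heat_semigroup [measurable]:
  assumes [measurable]: "\<rho> \<in> borel_measurable M" "g \<in> borel_measurable borel"
  shows "(\<lambda>s. heat_semigroup (\<rho> s) g x) \<in> borel_measurable M"
  unfolding heat_semigroup_def by measurable

lemma integrable_heat_kernel_mult:
  assumes "r > 0" and [measurable]: "g \<in> borel_measurable borel" and bound: "\<And>z. \<bar>g z\<bar> \<le> B"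
  shows "integrable lborel (\<lambda>z. heat_kernel r (z - x) * g z)"
proof (rule Bochner_Integration.integrable_bound)
  show "integrable lborel (\<lambda>z. B * heat_kernel r (z - x))"
    using assms by (auto intro: integrable_heat_kernel)
  show "AE z in lborel. norm (heat_kernel r (z - x) * g z) \<le> norm (B * heat_kernel r (z - x))"
  proof (intro AE_I2)
    fix z
    have "\<bar>g z\<bar> \<le> \<bar>B\<bar>"
      using bound[of z] by linarith
    then show "norm (heat_kernel r (z - x) * g z) \<le> norm (B * heat_kernel r (z - x))"
      using assms(1) by (simp add: abs_mult heat_kernel_nonneg mult.commute mult_right_mono)
  qed
qed measurable

lemma abs_heat_semigroup_le:
  assumes "r > 0" and [measurable]: "g \<in> borel_measurable borel" and bound: "\<And>z. \<bar>g z\<bar> \<le> B"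
  shows "\<bar>heat_semigroup r g x\<bar> \<le> B"
proof -
  have "\<bar>heat_semigroup r g x\<bar> \<le> (\<integral>z. \<bar>heat_kernel r (z - x) * g z\<bar> \<partial>lborel)"
    unfolding heat_semigroup_def by (rule integral_abs_bound)
  also have "\<dots> \<le> (\<integral>z. B * heat_kernel r (z - x) \<partial>lborel)"
    using assms by (intro integral_mono integrable_abs integrable_heat_kernel_mult)
      (auto intro: integrable_heat_kernel mult_right_mono simp: abs_mult heat_kernel_nonneg mult.commute)
  finally show ?thesis
    using assms(1) by (simp add: integral_heat_kernel)
qed

lemma abs_heat_semigroup_diff_le:
  assumes "r > 0" and [measurable]: "g \<in> borel_measurable borel" and bound: "\<And>z. \<bar>g z\<bar> \<le> B"
  shows "\<bar>heat_semigroup r g x - g x\<bar> \<le> heat_semigroup r (\<lambda>z. \<bar>g z - g x\<bar>) x"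
proof -
  have "heat_semigroup r g x - g x = (\<integral>z. heat_kernel r (z - x) * (g z - g x) \<partial>lborel)"
    using assms integrable_heat_kernel_mult[OF assms] integrable_heat_kernel[OF assms(1), of x]
    by (simp add: heat_semigroup_def right_diff_distrib integral_heat_kernel)
  also have "\<bar>\<dots>\<bar> \<le> heat_semigroup r (\<lambda>z. \<bar>g z - g x\<bar>) x"
    unfolding heat_semigroup_def
    by (rule order_trans[OF integral_abs_bound]) (use assms(1) in \<open>simp add: abs_mult heat_kernel_nonneg\<close>)
  finally show ?thesis .
qed

lemma integral_heat_kernel_swap:
  fixes S :: "real set" and k \<rho> :: "real \<Rightarrow> real" and g :: "real^2 \<Rightarrow> real"
  assumes [measurable]: "g \<in> borel_measurable borel" and bound: "\<And>z. \<bar>g z\<bar> \<le> B"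
    and [measurable]: "S \<in> sets borel" "k \<in> borel_measurable borel" "\<rho> \<in> borel_measurable borel"
    and k: "set_integrable lborel S k" and \<rho>: "\<And>s. s \<in> S \<Longrightarrow> 0 < \<rho> s"
  shows "(\<integral>z. (\<integral>s\<in>S. k s * heat_kernel (\<rho> s) (z - x) * g z \<partial>lborel) \<partial>lborel)
       = (\<integral>s\<in>S. k s * heat_semigroup (\<rho> s) g x \<partial>lborel)"
proof -
  define F where "F s z = indicator S s *\<^sub>R (k s * heat_kernel (\<rho> s) (z - x) * g z)" for s z
  have B: "0 \<le> B" using bound[of 0] by simp
  have "integrable (lborel \<Otimes>\<^sub>M lborel) (case_prod F)"
  proof (rule lborel_pair.Fubini_integrable)
    have "integrable lborel (\<lambda>s. B * norm (indicator S s *\<^sub>R k s))"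
      using k unfolding set_integrable_def by (intro integrable_mult_right integrable_norm)
    then show "integrable lborel (\<lambda>s. \<integral>z. norm (case_prod F (s, z)) \<partial>lborel)"
    proof (rule Bochner_Integration.integrable_bound)
      show "AE s in lborel. norm (\<integral>z. norm (case_prod F (s, z)) \<partial>lborel) \<le> norm (B * norm (indicator S s *\<^sub>R k s))"
      proof (intro AE_I2)
        fix s
        have "(\<integral>z. norm (F s z) \<partial>lborel) = indicator S s * \<bar>k s\<bar> * heat_semigroup (\<rho> s) (\<lambda>z. \<bar>g z\<bar>) x"
          by (simp add: F_def heat_semigroup_def abs_mult indicator_def \<rho> heat_kernel_nonneg less_imp_le mult.assoc)
        moreover have "s \<in> S \<Longrightarrow> \<bar>heat_semigroup (\<rho> s) (\<lambda>z. \<bar>g z\<bar>) x\<bar> \<le> B"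
          using bound \<rho> by (intro abs_heat_semigroup_le) auto
        ultimately show "norm (\<integral>z. norm (case_prod F (s, z)) \<partial>lborel) \<le> norm (B * norm (indicator S s *\<^sub>R k s))"
          using B by (auto simp: indicator_def abs_mult mult.commute[of B] intro: mult_left_mono)
      qed
    qed (unfold F_def, measurable)
    show "AE s in lborel. integrable lborel (\<lambda>z. case_prod F (s, z))"
      using \<rho> bound by (intro AE_I2) (auto simp: F_def indicator_def mult.assoc intro!: integrable_heat_kernel_mult)
  qed (unfold F_def, measurable)
  then have "(\<integral>z. (\<integral>s. F s z \<partial>lborel) \<partial>lborel) = (\<integral>s. (\<integral>z. F s z \<partial>lborel) \<partial>lborel)"
    by (rule lborel_pair.Fubini_integral)
  then show ?thesis
    by (simp add: F_def set_lebesgue_integral_def heat_semigroup_def mult.assoc)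
qed

section \<open>Logarithmically weighted time averages\<close>

lemma set_integral_dominated:
  fixes f b :: "'a \<Rightarrow> real"
  assumes "set_borel_measurable M A f" "set_integrable M A b" "\<And>x. x \<in> A \<Longrightarrow> \<bar>f x\<bar> \<le> b x"
  shows "set_integrable M A f" "\<bar>\<integral>x\<in>A. f x \<partial>M\<bar> \<le> (\<integral>x\<in>A. b x \<partial>M)"
proof -
  have "AE x in M. x \<in> A \<longrightarrow> norm (f x) \<le> norm (b x)"
  proof (intro AE_I2 impI)
    fix x assume "x \<in> A"
    then show "norm (f x) \<le> norm (b x)"
      using assms(3)[of x] by simp
  qed
  then show f: "set_integrable M A f"
    by (rule set_integrable_bound[OF assms(2,1)])
  moreover have "set_integrable M A (\<lambda>x. - f x)"
    using set_integrable_mult_right[OF f, of "-1"] by simp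
  ultimately have "(\<integral>x\<in>A. f x \<partial>M) \<le> (\<integral>x\<in>A. b x \<partial>M)" "(\<integral>x\<in>A. - f x \<partial>M) \<le> (\<integral>x\<in>A. b x \<partial>M)"
    using assms(2,3) by (auto intro!: set_integral_mono simp: abs_le_iff)
  then show "\<bar>\<integral>x\<in>A. f x \<partial>M\<bar> \<le> (\<integral>x\<in>A. b x \<partial>M)"
    by (simp add: abs_le_iff set_integral_uminus[OF f])
qed

lemma set_integrable_inverse_shift: "0 < (e::real) \<Longrightarrow> set_integrable lborel {0..t} (\<lambda>s. 1 / (s + e))"
  unfolding set_integrable_def
  by (rule borel_integrable_compact) (auto intro!: continuous_intros)

lemma set_integral_inverse_shift:
  fixes e t :: real
  assumes "0 < e" "0 \<le> t"
  shows "(\<integral>s\<in>{0..t}. 1 / (s + e) \<partial>lborel) = ln (t + e) - ln e"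
proof -
  have "(\<integral>s\<in>{0..t}. 1 / (s + e) \<partial>lborel) = (LBINT s=ereal 0..ereal t. 1 / (s + e))"
    using assms by (simp add: interval_integral_Icc)
  also have "\<dots> = ln (t + e) - ln (0 + e)"
    using assms
    by (intro interval_integral_FTC_finite)
       (auto intro!: continuous_intros derivative_eq_intros simp flip: has_real_derivative_iff_has_vector_derivative)
  finally show ?thesis
    by simp
qed

lemma abs_log_weighted_integral_le:
  fixes h :: "real \<Rightarrow> real"
  assumes [measurable]: "h \<in> borel_measurable borel" and "0 < e" "0 \<le> t"
    and bound: "\<And>s. s \<in> {0..t} \<Longrightarrow> \<bar>h s\<bar> \<le> M"
  shows "\<bar>\<integral>s\<in>{0..t}. 1 / (s + e) * h s \<partial>lborel\<bar> \<le> M * (ln (t + e) - ln e)"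
proof -
  have "\<bar>\<integral>s\<in>{0..t}. 1 / (s + e) * h s \<partial>lborel\<bar> \<le> (\<integral>s\<in>{0..t}. M * (1 / (s + e)) \<partial>lborel)"
  proof (rule set_integral_dominated(2))
    show "set_integrable lborel {0..t} (\<lambda>s. M * (1 / (s + e)))"
      using assms(2) by (intro set_integrable_mult_right set_integrable_inverse_shift)
    show "\<bar>1 / (s + e) * h s\<bar> \<le> M * (1 / (s + e))" if "s \<in> {0..t}" for s
      using that assms(2) bound[OF that] by (auto simp: abs_mult intro!: divide_right_mono)
  qed (unfold set_borel_measurable_def, measurable)
  also have "\<dots> = M * (ln (t + e) - ln e)"
    by (simp only: set_integral_mult_right set_integral_inverse_shift[OF assms(2,3)])
  finally show ?thesis .
qed

lemma log_weighted_ratio_le: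
  fixes e t :: real
  assumes "0 < e" "e < 1/2" "0 \<le> t"
  shows "(ln (t + e) - ln e) / - ln e \<le> 1 + t / ln 2"
proof -
  have ln2: "0 < ln (2::real)"
    by simp
  have "ln 2 \<le> ln (1 / e)"
    using assms by (subst ln_le_cancel_iff) (auto simp: field_simps)
  then have le: "ln 2 \<le> - ln e"
    using assms by (simp add: ln_div)
  then have lnpos: "0 < - ln e"
    using ln2 by linarith
  have "ln (t + e) / - ln e \<le> t / ln 2"
  proof (cases "ln (t + e) \<le> 0")
    case True
    then show ?thesis
      using lnpos ln2 assms(3) by (intro order_trans[OF divide_nonpos_pos divide_nonneg_pos]) auto
  next
    case False
    have "ln (t + e) \<le> t"
      using ln_le_minus_one[of "t + e"] assms by linarith
    then have "ln (t + e) / - ln e \<le> t / - ln e"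
      using lnpos by (intro divide_right_mono) auto
    also have "\<dots> \<le> t / ln 2"
      using le ln2 assms(3) mult_pos_pos[OF lnpos ln2] by (intro divide_left_mono) auto
    finally show ?thesis .
  qed
  then show ?thesis
    using lnpos by (simp add: diff_divide_distrib)
qed

lemma log_weighted_integral_split:
  fixes g :: "real \<Rightarrow> real"
  assumes [measurable]: "g \<in> borel_measurable borel" and bound: "\<And>u. 0 < u \<Longrightarrow> \<bar>g u\<bar> \<le> M"
    and e: "0 < e" and t: "0 \<le> t"
  shows "(\<integral>s\<in>{0..t}. 1 / (s + e) * g (s + e) \<partial>lborel)
    = L * (ln (t + e) - ln e) + (\<integral>s\<in>{0..t}. 1 / (s + e) * (g (s + e) - L) \<partial>lborel)"
proof -
  have err_int: "set_integrable lborel {0..t} (\<lambda>s. 1 / (s + e) * (g (s + e) - L))"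
  proof (rule set_integral_dominated(1))
    show "set_integrable lborel {0..t} (\<lambda>s. (M + \<bar>L\<bar>) * (1 / (s + e)))"
      using e by (intro set_integrable_mult_right set_integrable_inverse_shift)
    show "\<bar>1 / (s + e) * (g (s + e) - L)\<bar> \<le> (M + \<bar>L\<bar>) * (1 / (s + e))" if "s \<in> {0..t}" for s
      using that e bound[of "s + e"] by (auto simp: abs_mult intro!: divide_right_mono)
  qed (unfold set_borel_measurable_def, measurable)
  have inv_int: "set_integrable lborel {0..t} (\<lambda>s. L * (1 / (s + e)))"
    using e by (intro set_integrable_mult_right set_integrable_inverse_shift)
  have "(\<integral>s\<in>{0..t}. 1 / (s + e) * g (s + e) \<partial>lborel)
      = (\<integral>s\<in>{0..t}. L * (1 / (s + e)) + 1 / (s + e) * (g (s + e) - L) \<partial>lborel)"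
    by (simp add: algebra_simps)
  also have "\<dots> = L * (\<integral>s\<in>{0..t}. 1 / (s + e) \<partial>lborel) + (\<integral>s\<in>{0..t}. 1 / (s + e) * (g (s + e) - L) \<partial>lborel)"
    unfolding set_integral_add(2)[OF inv_int err_int] set_integral_mult_right ..
  finally show ?thesis
    using e t by (simp add: set_integral_inverse_shift)
qed

lemma abs_log_weighted_error_le:
  fixes g :: "real \<Rightarrow> real"
  assumes [measurable]: "g \<in> borel_measurable borel" and bound: "\<And>u. 0 < u \<Longrightarrow> \<bar>g u\<bar> \<le> M"
    and close: "\<And>u. 0 < u \<Longrightarrow> u < \<delta> \<Longrightarrow> \<bar>g u - L\<bar> \<le> \<eta>"
    and "0 < \<delta>" and e: "0 < e" and t: "0 \<le> t"
  shows "\<bar>\<integral>s\<in>{0..t}. 1 / (s + e) * (g (s + e) - L) \<partial>lborel\<bar> \<le> \<eta> * (ln (t + e) - ln e) + t * ((M + \<bar>L\<bar>) / \<delta>)"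
proof -
  have "0 \<le> \<eta>" "0 \<le> M"
    using close[of "\<delta> / 2"] bound[of 1] \<open>0 < \<delta>\<close> by auto
  have const_int: "set_integrable lborel {0..t} (\<lambda>_. (M + \<bar>L\<bar>) / \<delta>)"
    unfolding set_integrable_def by (rule borel_integrable_compact) auto
  have inv_int: "set_integrable lborel {0..t} (\<lambda>s. \<eta> * (1 / (s + e)))"
    using e by (intro set_integrable_mult_right set_integrable_inverse_shift)
  have "\<bar>\<integral>s\<in>{0..t}. 1 / (s + e) * (g (s + e) - L) \<partial>lborel\<bar>
      \<le> (\<integral>s\<in>{0..t}. \<eta> * (1 / (s + e)) + (M + \<bar>L\<bar>) / \<delta> \<partial>lborel)"
  proof (rule set_integral_dominated(2))
    show "set_integrable lborel {0..t} (\<lambda>s. \<eta> * (1 / (s + e)) + (M + \<bar>L\<bar>) / \<delta>)"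
      using inv_int const_int by (rule set_integral_add(1))
    show "\<bar>1 / (s + e) * (g (s + e) - L)\<bar> \<le> \<eta> * (1 / (s + e)) + (M + \<bar>L\<bar>) / \<delta>" if s: "s \<in> {0..t}" for s
    proof (cases "s + e < \<delta>")
      case True
      then show ?thesis
        using s e close[of "s + e"] \<open>0 \<le> M\<close> \<open>0 < \<delta>\<close>
        by (auto simp: abs_mult intro!: add_increasing2 divide_right_mono)
    next
      case False
      then have "1 / (s + e) * \<bar>g (s + e) - L\<bar> \<le> 1 / \<delta> * (M + \<bar>L\<bar>)"
        using s e \<open>0 < \<delta>\<close> bound[of "s + e"] by (intro mult_mono) (auto intro: divide_left_mono)
      then show ?thesis
        using s e \<open>0 \<le> \<eta>\<close> by (auto simp: abs_mult intro!: add_increasing)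
    qed
  qed (unfold set_borel_measurable_def, measurable)
  also have "\<dots> = \<eta> * (\<integral>s\<in>{0..t}. 1 / (s + e) \<partial>lborel) + (\<integral>s\<in>{0..t}. (M + \<bar>L\<bar>) / \<delta> \<partial>lborel)"
    unfolding set_integral_add(2)[OF inv_int const_int] set_integral_mult_right ..
  also have "\<dots> = \<eta> * (ln (t + e) - ln e) + t * ((M + \<bar>L\<bar>) / \<delta>)"
    using e t by (simp add: set_integral_inverse_shift set_integral_const)
  finally show ?thesis .
qed

lemma log_weighted_error_tendsto:
  fixes g :: "real \<Rightarrow> real"
  assumes [measurable]: "g \<in> borel_measurable borel" and bound: "\<And>u. 0 < u \<Longrightarrow> \<bar>g u\<bar> \<le> M"
    and lim: "(g \<longlongrightarrow> L) (at_right 0)" and t: "0 < t"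
  shows "((\<lambda>e. (-1 / ln e) * (\<integral>s\<in>{0..t}. 1 / (s + e) * (g (s + e) - L) \<partial>lborel)) \<longlongrightarrow> 0) (at_right 0)"
proof (rule tendstoI)
  fix \<epsilon> :: real
  assume "0 < \<epsilon>"
  then have "\<forall>\<^sub>F u in at_right 0. dist (g u) L < \<epsilon> / 3"
    using lim by (intro tendstoD) auto
  then obtain \<delta> where "0 < \<delta>" and \<delta>: "\<And>u. 0 < u \<Longrightarrow> u < \<delta> \<Longrightarrow> \<bar>g u - L\<bar> \<le> \<epsilon> / 3"
    unfolding eventually_at_right_field dist_real_def by (auto intro: less_imp_le)
  define K where "K = t * ((M + \<bar>L\<bar>) / \<delta>)"
  have "((\<lambda>e. (ln (t + e) - ln e) / - ln e) \<longlongrightarrow> 1) (at_right 0)"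
    using t by real_asymp
  then have "\<forall>\<^sub>F e in at_right 0. (ln (t + e) - ln e) / - ln e < 2"
    by (rule order_tendstoD) simp
  moreover have "((\<lambda>e. K * (-1 / ln e)) \<longlongrightarrow> 0) (at_right (0::real))"
    by real_asymp
  then have "\<forall>\<^sub>F e in at_right 0. K * (-1 / ln e) < \<epsilon> / 3"
    by (rule order_tendstoD) (use \<open>0 < \<epsilon>\<close> in simp)
  moreover have "\<forall>\<^sub>F e in at_right (0::real). 0 < e \<and> e < 1"
    unfolding eventually_at_right_field by (intro exI[of _ 1]) auto
  ultimately show "\<forall>\<^sub>F e in at_right 0.
      dist ((-1 / ln e) * (\<integral>s\<in>{0..t}. 1 / (s + e) * (g (s + e) - L) \<partial>lborel)) 0 < \<epsilon>"
  proof eventually_elim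
    case (elim e)
    let ?err = "\<integral>s\<in>{0..t}. 1 / (s + e) * (g (s + e) - L) \<partial>lborel"
    have "0 < - ln e"
      using elim by simp
    have "dist ((-1 / ln e) * ?err) 0 = \<bar>?err\<bar> / - ln e"
      using \<open>0 < - ln e\<close> by (simp add: abs_mult abs_div)
    also have "\<dots> \<le> (\<epsilon> / 3 * (ln (t + e) - ln e) + K) / - ln e"
    proof (rule divide_right_mono)
      show "\<bar>?err\<bar> \<le> \<epsilon> / 3 * (ln (t + e) - ln e) + K"
        unfolding K_def using elim t \<open>0 < \<delta>\<close>
        by (intro abs_log_weighted_error_le[OF assms(1) bound \<delta>]) auto
    qed (use \<open>0 < - ln e\<close> in simp)
    also have "\<dots> = \<epsilon> / 3 * ((ln (t + e) - ln e) / - ln e) + K * (-1 / ln e)"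
      using \<open>0 < - ln e\<close> by (simp add: field_simps)
    also have "\<dots> < \<epsilon> / 3 * 2 + \<epsilon> / 3"
      using elim \<open>0 < \<epsilon>\<close> by (intro add_less_le_mono mult_strict_left_mono) auto
    finally show ?case
      by simp
  qed
qed

lemma log_weighted_mean_tendsto:
  fixes g :: "real \<Rightarrow> real"
  assumes [measurable]: "g \<in> borel_measurable borel" and bound: "\<And>u. 0 < u \<Longrightarrow> \<bar>g u\<bar> \<le> M"
    and lim: "(g \<longlongrightarrow> L) (at_right 0)" and t: "0 < t"
  shows "((\<lambda>e. (-1 / ln e) * (\<integral>s\<in>{0..t}. 1 / (s + e) * g (s + e) \<partial>lborel)) \<longlongrightarrow> L) (at_right 0)"
proof -
  let ?err = "\<lambda>e. \<integral>s\<in>{0..t}. 1 / (s + e) * (g (s + e) - L) \<partial>lborel"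
  have "((\<lambda>e. (ln (t + e) - ln e) / - ln e) \<longlongrightarrow> 1) (at_right 0)"
    using t by real_asymp
  then have "((\<lambda>e. L * ((ln (t + e) - ln e) / - ln e) + (-1 / ln e) * ?err e) \<longlongrightarrow> L * 1 + 0) (at_right 0)"
    by (intro tendsto_intros log_weighted_error_tendsto[OF assms])
  moreover have "\<forall>\<^sub>F e in at_right 0. L * ((ln (t + e) - ln e) / - ln e) + (-1 / ln e) * ?err e
      = (-1 / ln e) * (\<integral>s\<in>{0..t}. 1 / (s + e) * g (s + e) \<partial>lborel)"
    using eventually_at_right_less[of 0]
  proof eventually_elim
    case (elim e)
    then show ?case
      using log_weighted_integral_split[OF assms(1) bound elim, where t=t and L=L] t
      by (simp add: add_divide_distrib)
  qed
  ultimately show ?thesis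
    by (simp add: tendsto_cong)
qed

section \<open>Lebesgue points on cubes\<close>

lemma set_integrable_bounded_cbox:
  fixes f :: "'a::euclidean_space \<Rightarrow> real"
  assumes [measurable]: "f \<in> borel_measurable borel" and bound: "\<And>x. \<bar>f x\<bar> \<le> B"
  shows "set_integrable lborel (cbox a b) f"
  unfolding set_integrable_def
proof (rule Bochner_Integration.integrable_bound)
  show "integrable lborel (\<lambda>x. B * indicator (cbox a b) x)"
    by (intro integrable_mult_right integrable_real_indicator) (auto simp: emeasure_lborel_cbox_eq)
  show "AE x in lborel. norm (indicator (cbox a b) x *\<^sub>R f x) \<le> norm (B * indicator (cbox a b) x :: real)"
    using bound by (intro AE_I2) (auto simp: indicator_def intro: order_trans[OF _ abs_ge_self])
qed measurable

lemma measure_lborel_cube: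
  fixes x :: "'a::euclidean_space"
  assumes "0 \<le> h"
  shows "measure lborel (cbox x (x + h *\<^sub>R One)) = h ^ DIM('a)"
  using assms by (simp add: measure_lborel_cbox_eq inner_simps prod_constant)

lemma measure_lborel_centered_cube:
  fixes x :: "'a::euclidean_space"
  assumes "0 \<le> h"
  shows "measure lborel (cbox (x - h *\<^sub>R One) (x + h *\<^sub>R One)) = (2 * h) ^ DIM('a)"
proof -
  have "(x + h *\<^sub>R One - (x - h *\<^sub>R One)) \<bullet> b = 2 * h" if "b \<in> Basis" for b
    using that by (simp add: inner_simps)
  then show ?thesis
    using assms by (simp add: measure_lborel_cbox_eq inner_simps prod_constant)
qed

lemma set_integral_nonneg_real:
  fixes F :: "'a \<Rightarrow> real"
  shows "(\<And>y. y \<in> A \<Longrightarrow> 0 \<le> F y) \<Longrightarrow> 0 \<le> (\<integral>y\<in>A. F y \<partial>M)"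
  unfolding set_lebesgue_integral_def by (intro integral_nonneg_AE AE_I2) (simp add: indicator_def)

lemma set_integral_cube_abs_diff_le:
  fixes f :: "'a::euclidean_space \<Rightarrow> real"
  assumes [measurable]: "f \<in> borel_measurable borel" and bound: "\<And>x. \<bar>f x\<bar> \<le> B" and "0 \<le> h"
  shows "(\<integral>y\<in>cbox x (x + h *\<^sub>R One). \<bar>f y - a\<bar> \<partial>lborel)
    \<le> (\<integral>y\<in>cbox x (x + h *\<^sub>R One). \<bar>f y - c\<bar> \<partial>lborel) + h ^ DIM('a) * \<bar>c - a\<bar>"
proof -
  have dev_int: "set_integrable lborel (cbox x (x + h *\<^sub>R One)) (\<lambda>y. \<bar>f y - b\<bar>)" for b
  proof (rule set_integrable_bounded_cbox)
    show "(\<lambda>y. \<bar>f y - b\<bar>) \<in> borel_measurable borel"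
      by measurable
    show "\<bar>\<bar>f y - b\<bar>\<bar> \<le> B + \<bar>b\<bar>" for y
      using bound[of y] by linarith
  qed
  have const_int: "set_integrable lborel (cbox x (x + h *\<^sub>R One)) (\<lambda>_. \<bar>c - a\<bar>)"
    by (rule set_integrable_bounded_cbox[where B="\<bar>c - a\<bar>"]) auto
  have "(\<integral>y\<in>cbox x (x + h *\<^sub>R One). \<bar>f y - a\<bar> \<partial>lborel)
      \<le> (\<integral>y\<in>cbox x (x + h *\<^sub>R One). \<bar>f y - c\<bar> + \<bar>c - a\<bar> \<partial>lborel)"
    by (intro set_integral_mono set_integral_add dev_int const_int) linarith
  also have "\<dots> = (\<integral>y\<in>cbox x (x + h *\<^sub>R One). \<bar>f y - c\<bar> \<partial>lborel) + h ^ DIM('a) * \<bar>c - a\<bar>"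
    using assms(3) emeasure_lborel_cbox_finite[of x "x + h *\<^sub>R One"]
    by (simp add: set_integral_add(2)[OF dev_int const_int] set_integral_const measure_lborel_cube)
  finally show ?thesis .
qed

lemma AE_corner_average_tendsto:
  fixes g :: "'a::euclidean_space \<Rightarrow> real"
  assumes [measurable]: "g \<in> borel_measurable borel" and bound: "\<And>x. \<bar>g x\<bar> \<le> B"
  shows "AE x in lborel. ((\<lambda>h. (\<integral>y\<in>cbox x (x + h *\<^sub>R One). g y \<partial>lborel) / h ^ DIM('a)) \<longlongrightarrow> g x) (at_right 0)"
proof -
  have int: "set_integrable lborel (cbox a b) g" for a b
    using bound by (rule set_integrable_bounded_cbox[OF assms(1)])
  obtain N where "negligible N" and N: "\<And>x e. x \<notin> N \<Longrightarrow> 0 < e \<Longrightarrow> \<exists>d>0. \<forall>h. 0 < h \<and> h < d \<longrightarrow>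
      norm (integral (cbox x (x + h *\<^sub>R One)) g /\<^sub>R h ^ DIM('a) - g x) < e"
    using integrable_ccontinuous_explicit[of g, OF set_borel_integral_eq_integral(1)[OF int]] by metis
  from \<open>negligible N\<close> have "AE x in lebesgue. x \<notin> N"
    by (intro AE_not_in) (simp add: negligible_iff_null_sets[symmetric])
  then have "AE x in lborel. x \<notin> N"
    by (simp add: AE_completion_iff)
  then show ?thesis
  proof (rule AE_mp, intro AE_I2 impI tendstoI)
    fix x and e :: real
    assume "x \<notin> N" "0 < e"
    from N[OF this] obtain d where "0 < d" and d: "\<And>h. 0 < h \<Longrightarrow> h < d \<Longrightarrow>
        norm (integral (cbox x (x + h *\<^sub>R One)) g /\<^sub>R h ^ DIM('a) - g x) < e"
      by blast
    then show "\<forall>\<^sub>F h in at_right 0. dist ((\<integral>y\<in>cbox x (x + h *\<^sub>R One). g y \<partial>lborel) / h ^ DIM('a)) (g x) < e"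
      unfolding eventually_at_right_field
      by (intro exI[of _ d]) (simp add: dist_real_def divide_inverse_commute set_borel_integral_eq_integral(2)[OF int])
  qed
qed

lemma AE_corner_lebesgue_point:
  fixes f :: "'a::euclidean_space \<Rightarrow> real"
  assumes [measurable]: "f \<in> borel_measurable borel" and bound: "\<And>x. \<bar>f x\<bar> \<le> B"
  shows "AE x in lborel. ((\<lambda>h. (\<integral>y\<in>cbox x (x + h *\<^sub>R One). \<bar>f y - f x\<bar> \<partial>lborel) / h ^ DIM('a)) \<longlongrightarrow> 0) (at_right 0)"
proof -
  define avg where "avg c (x::'a) h = (\<integral>y\<in>cbox x (x + h *\<^sub>R One). \<bar>f y - c\<bar> \<partial>lborel) / h ^ DIM('a)" for c x h
  have "AE x in lborel. \<forall>q. ((\<lambda>h. avg (real_of_rat q) x h) \<longlongrightarrow> \<bar>f x - real_of_rat q\<bar>) (at_right 0)"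
    unfolding AE_all_countable avg_def
  proof
    fix q :: rat
    show "AE x in lborel. ((\<lambda>h. (\<integral>y\<in>cbox x (x + h *\<^sub>R One). \<bar>f y - real_of_rat q\<bar> \<partial>lborel) / h ^ DIM('a))
        \<longlongrightarrow> \<bar>f x - real_of_rat q\<bar>) (at_right 0)"
    proof (rule AE_corner_average_tendsto)
      show "\<bar>\<bar>f y - real_of_rat q\<bar>\<bar> \<le> B + \<bar>real_of_rat q\<bar>" for y
        using bound[of y] by linarith
    qed measurable
  qed
  then show ?thesis
  proof (rule AE_mp, intro AE_I2 impI)
    fix x assume lim: "\<forall>q. ((\<lambda>h. avg (real_of_rat q) x h) \<longlongrightarrow> \<bar>f x - real_of_rat q\<bar>) (at_right 0)"
    have "((\<lambda>h. avg (f x) x h) \<longlongrightarrow> 0) (at_right 0)"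
    proof (rule tendstoI)
      fix e :: real assume "0 < e"
      obtain r where "r \<in> \<rat>" and r: "f x - e / 3 < r" "r < f x + e / 3"
        using Rats_dense_in_real[of "f x - e / 3" "f x + e / 3"] \<open>0 < e\<close> by auto
      then obtain q where "r = real_of_rat q"
        by (auto simp: Rats_def)
      with r have q: "\<bar>f x - real_of_rat q\<bar> < e / 3"
        by linarith
      have "\<forall>\<^sub>F h in at_right 0. dist (avg (real_of_rat q) x h) \<bar>f x - real_of_rat q\<bar> < e / 3"
        using lim by (intro tendstoD) (use \<open>0 < e\<close> in auto)
      with eventually_at_right_less[of 0] show "\<forall>\<^sub>F h in at_right 0. dist (avg (f x) x h) 0 < e"
      proof eventually_elim
        case (elim h)
        have "avg (f x) x h \<le> avg (real_of_rat q) x h + \<bar>real_of_rat q - f x\<bar>"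
          using set_integral_cube_abs_diff_le[OF assms(1) bound, of h x "f x" "real_of_rat q"] elim
          by (simp add: avg_def field_simps)
        moreover have "0 \<le> avg (f x) x h"
          unfolding avg_def using elim by (intro divide_nonneg_pos set_integral_nonneg_real) auto
        ultimately show ?case
          using elim q abs_minus_commute[of "real_of_rat q" "f x"]
          unfolding dist_real_def by arith
      qed
    qed
    then show "((\<lambda>h. (\<integral>y\<in>cbox x (x + h *\<^sub>R One). \<bar>f y - f x\<bar> \<partial>lborel) / h ^ DIM('a)) \<longlongrightarrow> 0) (at_right 0)"
      by (simp add: avg_def)
  qed
qed

definition sign_flip :: "('a \<Rightarrow> real) \<Rightarrow> 'a::euclidean_space \<Rightarrow> 'a" where
  "sign_flip c y = (\<Sum>j\<in>Basis. (c j * (y \<bullet> j)) *\<^sub>R j)"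

definition sign_vectors :: "('a::euclidean_space \<Rightarrow> real) set" where
  "sign_vectors = Basis \<rightarrow>\<^sub>E {-1, 1}"

lemma finite_sign_vectors: "finite sign_vectors"
  unfolding sign_vectors_def by (intro finite_PiE) auto

lemma sign_vectors_memD: "c \<in> sign_vectors \<Longrightarrow> j \<in> Basis \<Longrightarrow> c j = 1 \<or> c j = -1"
  unfolding sign_vectors_def using PiE_mem by fastforce

lemma inner_sign_flip: "j \<in> Basis \<Longrightarrow> sign_flip c y \<bullet> j = c j * (y \<bullet> j)"
  unfolding sign_flip_def by (simp add: inner_sum_left_Basis)

lemma sign_flip_sign_flip: "c \<in> sign_vectors \<Longrightarrow> sign_flip c (sign_flip c y) = y"
  by (rule euclidean_eqI) (auto simp: inner_sign_flip dest: sign_vectors_memD)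

lemma borel_measurable_sign_flip [measurable]: "sign_flip c \<in> borel_measurable borel"
  unfolding sign_flip_def by measurable

lemma lborel_distr_sign_flip:
  assumes "c \<in> sign_vectors"
  shows "distr lborel borel (sign_flip c) = (lborel :: 'a::euclidean_space measure)"
proof -
  have c: "\<And>j. j \<in> Basis \<Longrightarrow> \<bar>c j\<bar> = 1"
    using sign_vectors_memD[OF assms] by force
  have "(lborel :: 'a measure) = density (distr lborel borel (\<lambda>y. 0 + sign_flip c y)) (\<lambda>_. \<Prod>j\<in>Basis. \<bar>c j\<bar>)"
    unfolding sign_flip_def by (rule lborel_affine_euclidean) (use c in force)
  then show ?thesis
    using c by (simp add: density_1)
qed

lemma nn_integral_sign_flip:
  assumes "c \<in> sign_vectors" and [measurable]: "f \<in> borel_measurable borel"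
  shows "(\<integral>\<^sup>+y. f (sign_flip c y) \<partial>lborel) = (\<integral>\<^sup>+y. f y \<partial>(lborel :: 'a::euclidean_space measure))"
proof -
  have "(\<integral>\<^sup>+y. f y \<partial>(lborel :: 'a measure)) = (\<integral>\<^sup>+y. f y \<partial>distr lborel borel (sign_flip c))"
    by (simp add: lborel_distr_sign_flip[OF assms(1)])
  also have "\<dots> = (\<integral>\<^sup>+y. f (sign_flip c y) \<partial>lborel)"
    by (rule nn_integral_distr) measurable
  finally show ?thesis ..
qed

lemma cube_subset_sign_flip_corners:
  assumes "y \<in> cbox (x - h *\<^sub>R One) (x + h *\<^sub>R One)"
  shows "\<exists>c\<in>sign_vectors. sign_flip c y \<in> cbox (sign_flip c x) (sign_flip c x + h *\<^sub>R One)"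
proof
  let ?c = "restrict (\<lambda>j. if x \<bullet> j \<le> y \<bullet> j then 1 else -1) Basis"
  show "?c \<in> sign_vectors"
    by (auto simp: sign_vectors_def)
  show "sign_flip ?c y \<in> cbox (sign_flip ?c x) (sign_flip ?c x + h *\<^sub>R One)"
    using assms by (auto simp: mem_box inner_sign_flip inner_simps)
qed

lemma ennreal_set_integral_cbox:
  fixes F :: "'a::euclidean_space \<Rightarrow> real"
  assumes [measurable]: "F \<in> borel_measurable borel" and F: "\<And>y. 0 \<le> F y" "\<And>y. F y \<le> B"
  shows "ennreal (\<integral>y\<in>cbox a b. F y \<partial>lborel) = (\<integral>\<^sup>+y. ennreal (F y) * indicator (cbox a b) y \<partial>lborel)"
proof -
  have "set_integrable lborel (cbox a b) F"
    using F by (intro set_integrable_bounded_cbox[where B=B]) auto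
  then have "(\<integral>\<^sup>+y. ennreal (indicator (cbox a b) y *\<^sub>R F y) \<partial>lborel) = ennreal (\<integral>y\<in>cbox a b. F y \<partial>lborel)"
    unfolding set_lebesgue_integral_def set_integrable_def using F by (intro nn_integral_eq_integral) auto
  moreover have "(\<integral>\<^sup>+y. ennreal (indicator (cbox a b) y *\<^sub>R F y) \<partial>lborel) = (\<integral>\<^sup>+y. ennreal (F y) * indicator (cbox a b) y \<partial>lborel)"
    by (intro nn_integral_cong) (simp add: indicator_def)
  ultimately show ?thesis
    by simp
qed

lemma set_integral_centered_cube_le:
  fixes G :: "'a::euclidean_space \<Rightarrow> real"
  assumes [measurable]: "G \<in> borel_measurable borel" and G: "\<And>y. 0 \<le> G y" "\<And>y. G y \<le> B" and "0 \<le> h"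
  shows "(\<integral>y\<in>cbox (x - h *\<^sub>R One) (x + h *\<^sub>R One). G y \<partial>lborel) \<le> B * (2 * h) ^ DIM('a)"
proof -
  have "(\<integral>y\<in>cbox (x - h *\<^sub>R One) (x + h *\<^sub>R One). G y \<partial>lborel) \<le> (\<integral>y\<in>cbox (x - h *\<^sub>R One) (x + h *\<^sub>R One). B \<partial>lborel)"
  proof (rule set_integral_mono)
    show "set_integrable lborel (cbox (x - h *\<^sub>R One) (x + h *\<^sub>R One)) G"
      using G by (intro set_integrable_bounded_cbox[OF assms(1), where B=B]) (auto simp: abs_le_iff intro: order_trans)
    show "set_integrable lborel (cbox (x - h *\<^sub>R One) (x + h *\<^sub>R One)) (\<lambda>_. B)"
      by (rule set_integrable_bounded_cbox[where B="\<bar>B\<bar>"]) auto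
  qed (rule G(2))
  also have "\<dots> = measure lborel (cbox (x - h *\<^sub>R One) (x + h *\<^sub>R One)) * B"
    using emeasure_lborel_cbox_finite[of "x - h *\<^sub>R One" "x + h *\<^sub>R One"] by (subst set_integral_const) auto
  finally show ?thesis
    by (simp add: measure_lborel_centered_cube[OF assms(4)] mult.commute)
qed

lemma set_integral_cube_le_sign_flip_corners:
  fixes G :: "'a::euclidean_space \<Rightarrow> real"
  assumes [measurable]: "G \<in> borel_measurable borel" and G: "\<And>y. 0 \<le> G y" "\<And>y. G y \<le> B"
  shows "(\<integral>y\<in>cbox (x - h *\<^sub>R One) (x + h *\<^sub>R One). G y \<partial>lborel)
    \<le> (\<Sum>c\<in>sign_vectors. \<integral>y\<in>cbox (sign_flip c x) (sign_flip c x + h *\<^sub>R One). G (sign_flip c y) \<partial>lborel)"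
proof -
  define corner where "corner c = cbox (sign_flip c x) (sign_flip c x + h *\<^sub>R One)" for c
  have "ennreal (\<integral>y\<in>cbox (x - h *\<^sub>R One) (x + h *\<^sub>R One). G y \<partial>lborel)
      = (\<integral>\<^sup>+y. ennreal (G y) * indicator (cbox (x - h *\<^sub>R One) (x + h *\<^sub>R One)) y \<partial>lborel)"
    by (rule ennreal_set_integral_cbox[OF _ G]) measurable
  also have "\<dots> \<le> (\<integral>\<^sup>+y. (\<Sum>c\<in>sign_vectors. ennreal (G y) * indicator (corner c) (sign_flip c y)) \<partial>lborel)"
  proof (rule nn_integral_mono)
    fix y
    show "ennreal (G y) * indicator (cbox (x - h *\<^sub>R One) (x + h *\<^sub>R One)) y
        \<le> (\<Sum>c\<in>sign_vectors. ennreal (G y) * indicator (corner c) (sign_flip c y))"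
    proof (cases "y \<in> cbox (x - h *\<^sub>R One) (x + h *\<^sub>R One)")
      case True
      then obtain c where "c \<in> sign_vectors" "sign_flip c y \<in> corner c"
        unfolding corner_def using cube_subset_sign_flip_corners by blast
      then show ?thesis
        using True member_le_sum[of c sign_vectors "\<lambda>c. ennreal (G y) * indicator (corner c) (sign_flip c y)"]
        by (simp add: finite_sign_vectors)
    qed simp
  qed
  also have "\<dots> = (\<Sum>c\<in>sign_vectors. \<integral>\<^sup>+y. ennreal (G y) * indicator (corner c) (sign_flip c y) \<partial>lborel)"
    by (rule nn_integral_sum) (unfold corner_def, measurable)
  also have "\<dots> = (\<Sum>c\<in>sign_vectors. \<integral>\<^sup>+y. ennreal (G (sign_flip c y)) * indicator (corner c) y \<partial>lborel)"
  proof (rule sum.cong[OF refl])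
    fix c :: "'a \<Rightarrow> real" assume c: "c \<in> sign_vectors"
    have "(\<integral>\<^sup>+y. ennreal (G (sign_flip c y)) * indicator (corner c) y \<partial>lborel)
        = (\<integral>\<^sup>+y. ennreal (G (sign_flip c (sign_flip c y))) * indicator (corner c) (sign_flip c y) \<partial>lborel)"
      by (rule nn_integral_sign_flip[OF c, symmetric]) (unfold corner_def, measurable)
    then show "(\<integral>\<^sup>+y. ennreal (G y) * indicator (corner c) (sign_flip c y) \<partial>lborel)
        = (\<integral>\<^sup>+y. ennreal (G (sign_flip c y)) * indicator (corner c) y \<partial>lborel)"
      by (simp add: sign_flip_sign_flip[OF c])
  qed
  also have "\<dots> = (\<Sum>c\<in>sign_vectors. ennreal (\<integral>y\<in>corner c. G (sign_flip c y) \<partial>lborel))"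
  proof (rule sum.cong[OF refl])
    fix c :: "'a \<Rightarrow> real"
    show "(\<integral>\<^sup>+y. ennreal (G (sign_flip c y)) * indicator (corner c) y \<partial>lborel)
        = ennreal (\<integral>y\<in>corner c. G (sign_flip c y) \<partial>lborel)"
      unfolding corner_def by (rule ennreal_set_integral_cbox[where B=B, symmetric]) (measurable, use G in auto)
  qed
  also have "\<dots> = ennreal (\<Sum>c\<in>sign_vectors. \<integral>y\<in>corner c. G (sign_flip c y) \<partial>lborel)"
    using G by (intro sum_ennreal set_integral_nonneg_real) auto
  finally show ?thesis
    unfolding corner_def using G by (subst (asm) ennreal_le_iff) (auto intro!: sum_nonneg set_integral_nonneg_real)
qed

lemma AE_lebesgue_point:
  fixes f :: "'a::euclidean_space \<Rightarrow> real"
  assumes [measurable]: "f \<in> borel_measurable borel" and bound: "\<And>x. \<bar>f x\<bar> \<le> B"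
  shows "AE x in lborel.
    ((\<lambda>h. (\<integral>y\<in>cbox (x - h *\<^sub>R One) (x + h *\<^sub>R One). \<bar>f y - f x\<bar> \<partial>lborel) / h ^ DIM('a)) \<longlongrightarrow> 0) (at_right 0)"
proof -
  let ?corner = "\<lambda>c x h. (\<integral>y\<in>cbox (sign_flip c x) (sign_flip c x + h *\<^sub>R One). \<bar>f (sign_flip c y) - f x\<bar> \<partial>lborel) / h ^ DIM('a)"
  have "AE x in lborel. \<forall>c\<in>sign_vectors. ((\<lambda>h. ?corner c x h) \<longlongrightarrow> 0) (at_right 0)"
  proof (rule AE_finite_allI[OF finite_sign_vectors])
    fix c :: "'a \<Rightarrow> real" assume c: "c \<in> sign_vectors"
    have "AE w in distr lborel borel (sign_flip c). ((\<lambda>h. (\<integral>y\<in>cbox w (w + h *\<^sub>R One).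
        \<bar>f (sign_flip c y) - f (sign_flip c w)\<bar> \<partial>lborel) / h ^ DIM('a)) \<longlongrightarrow> 0) (at_right 0)"
      unfolding lborel_distr_sign_flip[OF c] using bound by (intro AE_corner_lebesgue_point) auto
    from AE_distrD[OF _ this] show "AE x in lborel. ((\<lambda>h. ?corner c x h) \<longlongrightarrow> 0) (at_right 0)"
      by (simp add: sign_flip_sign_flip[OF c])
  qed
  then show ?thesis
  proof (rule AE_mp, intro AE_I2 impI)
    fix x assume corners: "\<forall>c\<in>sign_vectors. ((\<lambda>h. ?corner c x h) \<longlongrightarrow> 0) (at_right 0)"
    let ?centred = "\<lambda>h. (\<integral>y\<in>cbox (x - h *\<^sub>R One) (x + h *\<^sub>R One). \<bar>f y - f x\<bar> \<partial>lborel) / h ^ DIM('a)"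
    have upper: "((\<lambda>h. \<Sum>c\<in>sign_vectors. ?corner c x h) \<longlongrightarrow> 0) (at_right 0)"
      using corners by (intro tendsto_null_sum) auto
    have le: "\<forall>\<^sub>F h in at_right 0. ?centred h \<le> (\<Sum>c\<in>sign_vectors. ?corner c x h)"
      using eventually_at_right_less[of 0]
    proof eventually_elim
      case (elim h)
      have "(\<integral>y\<in>cbox (x - h *\<^sub>R One) (x + h *\<^sub>R One). \<bar>f y - f x\<bar> \<partial>lborel)
          \<le> (\<Sum>c\<in>sign_vectors. \<integral>y\<in>cbox (sign_flip c x) (sign_flip c x + h *\<^sub>R One). \<bar>f (sign_flip c y) - f x\<bar> \<partial>lborel)"
      proof (rule set_integral_cube_le_sign_flip_corners)
        show "\<bar>f y - f x\<bar> \<le> 2 * B" for y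
          using bound[of x] bound[of y] by linarith
      qed auto
      then show ?case
        using elim by (simp add: sum_divide_distrib[symmetric] divide_right_mono)
    qed
    have ge: "\<forall>\<^sub>F h in at_right 0. 0 \<le> ?centred h"
      using eventually_at_right_less[of 0] by eventually_elim (auto intro!: divide_nonneg_pos set_integral_nonneg_real)
    show "(?centred \<longlongrightarrow> 0) (at_right 0)"
      by (rule tendsto_sandwich[OF ge le tendsto_const upper])
  qed
qed

section \<open>Heat semigroup at Lebesgue points\<close>

lemma heat_kernel_le_cube_shells:
  fixes x y :: "real^2"
  assumes "0 < r"
  obtains k :: nat where "y \<in> cbox (x - ((real k + 1) * sqrt r) *\<^sub>R One) (x + ((real k + 1) * sqrt r) *\<^sub>R One)"
    and "heat_kernel r (y - x) \<le> exp (- (real k)\<^sup>2 / 2) / (2 * pi * r)"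
proof
  define k where "k = nat \<lfloor>norm (y - x) / sqrt r\<rfloor>"
  have sr: "0 < sqrt r"
    using assms by simp
  have "norm (y - x) / sqrt r < real k + 1"
    unfolding k_def by linarith
  then have "norm (y - x) < (real k + 1) * sqrt r"
    using sr by (simp add: field_simps)
  then show "y \<in> cbox (x - ((real k + 1) * sqrt r) *\<^sub>R One) (x + ((real k + 1) * sqrt r) *\<^sub>R One)"
    using Basis_le_norm[of _ "y - x"] by (force simp: mem_box inner_simps abs_le_iff)
  have "real k \<le> norm (y - x) / sqrt r"
    unfolding k_def using sr by (simp add: of_nat_nat)
  then have "real k * sqrt r \<le> norm (y - x)"
    using sr by (simp add: field_simps)
  then have "(real k * sqrt r)\<^sup>2 \<le> (norm (y - x))\<^sup>2"
    using sr by (intro power_mono) auto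
  then have "- (norm (y - x))\<^sup>2 / (2 * r) \<le> - (real k)\<^sup>2 / 2"
    using assms by (simp add: power_mult_distrib field_simps)
  then show "heat_kernel r (y - x) \<le> exp (- (real k)\<^sup>2 / 2) / (2 * pi * r)"
    using assms by (simp add: heat_kernel_def divide_right_mono)
qed

lemma heat_semigroup_le_cube_shell_sum:
  fixes G :: "real^2 \<Rightarrow> real"
  assumes [measurable]: "G \<in> borel_measurable borel" and G: "\<And>y. 0 \<le> G y" "\<And>y. G y \<le> B" and r: "0 < r"
  shows "ennreal (heat_semigroup r G x) \<le> (\<Sum>k. ennreal (exp (- (real k)\<^sup>2 / 2) / (2 * pi * r) *
    (\<integral>y\<in>cbox (x - ((real k + 1) * sqrt r) *\<^sub>R One) (x + ((real k + 1) * sqrt r) *\<^sub>R One). G y \<partial>lborel)))"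
proof -
  define cube where "cube k = cbox (x - ((real k + 1) * sqrt r) *\<^sub>R One) (x + ((real k + 1) * sqrt r) *\<^sub>R One)" for k :: nat
  define a where "a k = exp (- (real k)\<^sup>2 / 2) / (2 * pi * r)" for k :: nat
  have a: "0 \<le> a k" for k
    using r by (simp add: a_def)
  have "ennreal (heat_semigroup r G x) = (\<integral>\<^sup>+y. ennreal (heat_kernel r (y - x) * G y) \<partial>lborel)"
    unfolding heat_semigroup_def using r G
    by (intro nn_integral_eq_integral[symmetric] integrable_heat_kernel_mult) (auto simp: heat_kernel_nonneg)
  also have "\<dots> \<le> (\<integral>\<^sup>+y. (\<Sum>k. ennreal (a k) * (ennreal (G y) * indicator (cube k) y)) \<partial>lborel)"
  proof (rule nn_integral_mono)
    fix y
    obtain k where k: "y \<in> cube k" "heat_kernel r (y - x) \<le> a k"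
      using heat_kernel_le_cube_shells[OF r] unfolding cube_def a_def by blast
    then have "ennreal (heat_kernel r (y - x) * G y) \<le> ennreal (a k * G y)"
      using G by (intro ennreal_leI mult_right_mono) auto
    also have "\<dots> = ennreal (a k) * (ennreal (G y) * indicator (cube k) y)"
      using k a G by (simp add: ennreal_mult)
    also have "\<dots> \<le> (\<Sum>k. ennreal (a k) * (ennreal (G y) * indicator (cube k) y))"
      using sum_le_suminf[OF summableI, of "{k}" "\<lambda>k. ennreal (a k) * (ennreal (G y) * indicator (cube k) y)"]
      by simp
    finally show "ennreal (heat_kernel r (y - x) * G y) \<le> (\<Sum>k. ennreal (a k) * (ennreal (G y) * indicator (cube k) y))" .
  qed
  also have "\<dots> = (\<Sum>k. ennreal (a k) * (\<integral>\<^sup>+y. ennreal (G y) * indicator (cube k) y \<partial>lborel))"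
    by (subst nn_integral_suminf) (auto simp: cube_def nn_integral_cmult)
  also have "\<dots> = (\<Sum>k. ennreal (a k * (\<integral>y\<in>cube k. G y \<partial>lborel)))"
    unfolding cube_def using G a
    by (simp add: ennreal_set_integral_cbox[where B=B, symmetric] ennreal_mult set_integral_nonneg_real)
  finally show ?thesis
    by (simp add: a_def cube_def)
qed

lemma summable_gaussian_shell_weights: "summable (\<lambda>k::nat. (real k + 1)\<^sup>2 * exp (- (real k)\<^sup>2 / 2))"
proof (rule summable_comparison_test_bigo)
  show "summable (\<lambda>k. norm (1 / real k ^ 2))"
    using inverse_power_summable[of 2, where ?'a=real] by (simp add: divide_inverse)
  show "(\<lambda>k::nat. (real k + 1)\<^sup>2 * exp (- (real k)\<^sup>2 / 2)) \<in> O(\<lambda>k. 1 / real k ^ 2)"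
    by real_asymp
qed

lemma shell_sum_tendsto_0:
  fixes \<Phi> :: "real \<Rightarrow> real" and w :: "nat \<Rightarrow> real"
  assumes w: "summable w" "\<And>k. 0 \<le> w k"
    and \<Phi>: "\<And>h. 0 < h \<Longrightarrow> 0 \<le> \<Phi> h \<and> \<Phi> h / h\<^sup>2 \<le> C"
    and lim: "((\<lambda>h. \<Phi> h / h\<^sup>2) \<longlongrightarrow> 0) (at_right 0)"
  shows "\<And>r. 0 < r \<Longrightarrow> summable (\<lambda>k. w k * (\<Phi> ((real k + 1) * sqrt r) / ((real k + 1) * sqrt r)\<^sup>2))"
    and "((\<lambda>r. \<Sum>k. w k * (\<Phi> ((real k + 1) * sqrt r) / ((real k + 1) * sqrt r)\<^sup>2)) \<longlongrightarrow> 0) (at_right 0)"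
proof -
  define u where "u k r = w k * (\<Phi> ((real k + 1) * sqrt r) / ((real k + 1) * sqrt r)\<^sup>2)" for k r
  have u: "norm (u k r) \<le> C * w k" if "0 < r" for k r
  proof -
    let ?h = "(real k + 1) * sqrt r"
    have "0 \<le> \<Phi> ?h" "\<Phi> ?h / ?h\<^sup>2 \<le> C"
      using \<Phi>[of ?h] that by auto
    then show ?thesis
      unfolding u_def using w(2)[of k] mult_left_mono[of "\<Phi> ?h / ?h\<^sup>2" C "w k"]
      by (simp add: abs_mult mult_ac)
  qed
  show "summable (\<lambda>k. u k r)" if "0 < r" for r
    by (rule summable_comparison_test[OF _ summable_mult[OF w(1), of C]]) (use u that in auto)
  have "((\<lambda>r. \<Sum>k. u k r) \<longlongrightarrow> (\<Sum>k::nat. 0)) (at_right 0)"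
  proof (rule tannerys_theorem[THEN conjunct2, THEN conjunct2])
    fix k :: nat
    have "filterlim (\<lambda>r. (real k + 1) * sqrt r) (at_right 0) (at_right 0)"
    proof (rule tendsto_imp_filterlim_at_right)
      show "((\<lambda>r. (real k + 1) * sqrt r) \<longlongrightarrow> 0) (at_right 0)"
        by (auto intro!: tendsto_eq_intros)
      show "\<forall>\<^sub>F r in at_right 0. 0 < (real k + 1) * sqrt r"
        using eventually_at_right_less[of 0] by eventually_elim simp
    qed
    with lim have "((\<lambda>r. \<Phi> ((real k + 1) * sqrt r) / ((real k + 1) * sqrt r)\<^sup>2) \<longlongrightarrow> 0) (at_right 0)"
      by (rule filterlim_compose)
    then show "((\<lambda>r. u k r) \<longlongrightarrow> 0) (at_right 0)"
      unfolding u_def by (rule tendsto_mult_right_zero)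
  next
    have "\<forall>\<^sub>F r in at_right 0. \<forall>k. norm (u k r) \<le> C * w k"
      using eventually_at_right_less[of 0] by eventually_elim (use u in auto)
    then show "\<forall>\<^sub>F (k, r) in at_top \<times>\<^sub>F at_right 0. norm (u k r) \<le> C * w k"
      unfolding eventually_prod_filter
      by (intro exI[of _ "\<lambda>_. True"] exI[of _ "\<lambda>r. \<forall>k. norm (u k r) \<le> C * w k"]) auto
  qed (use summable_mult[OF w(1), of C] in simp_all)
  then show "((\<lambda>r. \<Sum>k. u k r) \<longlongrightarrow> 0) (at_right 0)"
    by simp
qed

lemma heat_semigroup_tendsto_0:
  fixes G :: "real^2 \<Rightarrow> real"
  assumes [measurable]: "G \<in> borel_measurable borel" and G: "\<And>y. 0 \<le> G y" "\<And>y. G y \<le> B"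
    and lebesgue_point: "((\<lambda>h. (\<integral>y\<in>cbox (x - h *\<^sub>R One) (x + h *\<^sub>R One). G y \<partial>lborel) / h\<^sup>2) \<longlongrightarrow> 0) (at_right 0)"
  shows "((\<lambda>r. heat_semigroup r G x) \<longlongrightarrow> 0) (at_right 0)"
proof -
  define \<Phi> where "\<Phi> h = (\<integral>y\<in>cbox (x - h *\<^sub>R One) (x + h *\<^sub>R One). G y \<partial>lborel)" for h
  define w where "w k = (real k + 1)\<^sup>2 * exp (- (real k)\<^sup>2 / 2) / (2 * pi)" for k :: nat
  define u where "u k r = w k * (\<Phi> ((real k + 1) * sqrt r) / ((real k + 1) * sqrt r)\<^sup>2)" for k r
  have \<Phi>: "0 \<le> \<Phi> h \<and> \<Phi> h / h\<^sup>2 \<le> 4 * B" if "0 < h" for h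
  proof
    show "0 \<le> \<Phi> h"
      unfolding \<Phi>_def using G by (intro set_integral_nonneg_real) auto
    have "\<Phi> h \<le> B * (2 * h)\<^sup>2"
      unfolding \<Phi>_def using set_integral_centered_cube_le[OF assms(1) G, of h x] that by simp
    then show "\<Phi> h / h\<^sup>2 \<le> 4 * B"
      using that by (simp add: divide_le_eq power_mult_distrib)
  qed
  have w: "summable w" "0 \<le> w k" for k
    unfolding w_def using summable_gaussian_shell_weights by (auto intro: summable_divide)
  have lim: "((\<lambda>h. \<Phi> h / h\<^sup>2) \<longlongrightarrow> 0) (at_right 0)"
    using lebesgue_point by (simp add: \<Phi>_def)
  have summable_u: "summable (\<lambda>k. u k r)" if "0 < r" for r
    unfolding u_def using w \<Phi> lim that by (rule shell_sum_tendsto_0(1))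
  have shell_lim: "((\<lambda>r. \<Sum>k. u k r) \<longlongrightarrow> 0) (at_right 0)"
    unfolding u_def using w \<Phi> lim by (rule shell_sum_tendsto_0(2))
  have u_nonneg: "0 \<le> u k r" if "0 < r" for k r
    unfolding u_def using w(2)[of k] \<Phi>[of "(real k + 1) * sqrt r"] that by simp
  have "heat_semigroup r G x \<le> (\<Sum>k. u k r)" if r: "0 < r" for r
  proof -
    have "exp (- (real k)\<^sup>2 / 2) / (2 * pi * r) * \<Phi> ((real k + 1) * sqrt r) = u k r" for k
      using r by (simp add: u_def w_def power_mult_distrib)
    then have "ennreal (heat_semigroup r G x) \<le> (\<Sum>k. ennreal (u k r))"
      using heat_semigroup_le_cube_shell_sum[OF assms(1) G r, where x=x] by (simp add: \<Phi>_def)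
    also have "\<dots> = ennreal (\<Sum>k. u k r)"
      using u_nonneg r summable_u by (intro suminf_ennreal2) auto
    finally show ?thesis
      using u_nonneg r summable_u by (subst (asm) ennreal_le_iff) (auto intro: suminf_nonneg)
  qed
  then have upper: "\<forall>\<^sub>F r in at_right 0. heat_semigroup r G x \<le> (\<Sum>k. u k r)"
    using eventually_at_right_less[of 0] by (auto elim: eventually_mono)
  have lower: "\<forall>\<^sub>F r in at_right 0. 0 \<le> heat_semigroup r G x"
    using eventually_at_right_less[of 0] unfolding heat_semigroup_def
    by eventually_elim (use G in \<open>simp add: heat_kernel_nonneg integral_nonneg_AE\<close>)
  show ?thesis
    by (rule tendsto_sandwich[OF lower upper tendsto_const shell_lim])
qed

lemma AE_heat_semigroup_tendsto:
  fixes \<psi> :: "real^2 \<Rightarrow> real"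
  assumes [measurable]: "\<psi> \<in> borel_measurable borel" and bound: "\<And>z. \<bar>\<psi> z\<bar> \<le> M"
  shows "AE x in lborel. ((\<lambda>r. heat_semigroup r \<psi> x) \<longlongrightarrow> \<psi> x) (at_right 0)"
  using AE_lebesgue_point[OF assms]
proof (rule AE_mp, intro AE_I2 impI)
  fix x :: "real^2"
  assume "((\<lambda>h. (\<integral>y\<in>cbox (x - h *\<^sub>R One) (x + h *\<^sub>R One). \<bar>\<psi> y - \<psi> x\<bar> \<partial>lborel) / h ^ DIM(real^2)) \<longlongrightarrow> 0) (at_right 0)"
  then have "((\<lambda>h. (\<integral>y\<in>cbox (x - h *\<^sub>R One) (x + h *\<^sub>R One). \<bar>\<psi> y - \<psi> x\<bar> \<partial>lborel) / h\<^sup>2) \<longlongrightarrow> 0) (at_right 0)"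
    by simp
  then have "((\<lambda>r. heat_semigroup r (\<lambda>z. \<bar>\<psi> z - \<psi> x\<bar>) x) \<longlongrightarrow> 0) (at_right 0)"
  proof (rule heat_semigroup_tendsto_0[rotated 3])
    show "\<bar>\<psi> y - \<psi> x\<bar> \<le> 2 * M" for y
      using bound[of x] bound[of y] by linarith
  qed simp_all
  moreover have "\<forall>\<^sub>F r in at_right 0. norm (heat_semigroup r \<psi> x - \<psi> x) \<le> heat_semigroup r (\<lambda>z. \<bar>\<psi> z - \<psi> x\<bar>) x"
    using eventually_at_right_less[of 0] by eventually_elim (simp add: abs_heat_semigroup_diff_le[OF _ assms])
  ultimately have "((\<lambda>r. heat_semigroup r \<psi> x - \<psi> x) \<longlongrightarrow> 0) (at_right 0)"
    by (rule Lim_null_comparison[rotated])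
  then show "((\<lambda>r. heat_semigroup r \<psi> x) \<longlongrightarrow> \<psi> x) (at_right 0)"
    by (simp add: LIM_zero_iff)
qed

section \<open>The logarithmic time average\<close>

lemma integral_heat_kernel_log_weight_swap:
  fixes \<psi> :: "real^2 \<Rightarrow> real"
  assumes [measurable]: "\<psi> \<in> borel_measurable borel" and bound: "\<And>z. \<bar>\<psi> z\<bar> \<le> M"
    and "0 < \<epsilon>" "0 < c"
  shows "(\<integral>z. (\<integral>s\<in>{0..t}. 1 / (s + \<epsilon>) * heat_kernel ((s + c * \<epsilon>) / 2) (z - x) * \<psi> z \<partial>lborel) \<partial>lborel)
    = (\<integral>s\<in>{0..t}. 1 / (s + \<epsilon>) * heat_semigroup ((s + c * \<epsilon>) / 2) \<psi> x \<partial>lborel)"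
  using assms by (intro integral_heat_kernel_swap set_integrable_inverse_shift) (auto intro: add_nonneg_pos)

lemma abs_log_heat_average_le:
  fixes \<psi> :: "real^2 \<Rightarrow> real"
  assumes [measurable]: "\<psi> \<in> borel_measurable borel" and bound: "\<And>z. \<bar>\<psi> z\<bar> \<le> M"
    and t: "0 < t" and \<epsilon>: "0 < \<epsilon>" "\<epsilon> < 1/2"
  shows "\<bar>(-1 / ln \<epsilon>) * (\<integral>z. (\<integral>s\<in>{0..t}. 1 / (s + \<epsilon>) *
    heat_kernel ((s + 2 * \<epsilon>) / 2) (z - x) * \<psi> z \<partial>lborel) \<partial>lborel)\<bar> \<le> M * (1 + t / ln 2)"
proof -
  let ?I = "\<integral>s\<in>{0..t}. 1 / (s + \<epsilon>) * heat_semigroup ((s + 2 * \<epsilon>) / 2) \<psi> x \<partial>lborel"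
  have "0 < - ln \<epsilon>"
    using \<epsilon> by simp
  then have "\<bar>(-1 / ln \<epsilon>) * ?I\<bar> = \<bar>?I\<bar> / - ln \<epsilon>"
    by (simp add: abs_mult abs_div)
  also have "\<dots> \<le> M * (ln (t + \<epsilon>) - ln \<epsilon>) / - ln \<epsilon>"
    using \<epsilon> t bound \<open>0 < - ln \<epsilon>\<close>
    by (intro divide_right_mono abs_log_weighted_integral_le abs_heat_semigroup_le) auto
  also have "\<dots> = M * ((ln (t + \<epsilon>) - ln \<epsilon>) / - ln \<epsilon>)"
    by simp
  also have "\<dots> \<le> M * (1 + t / ln 2)"
    using \<epsilon> t bound[of x] by (intro mult_left_mono log_weighted_ratio_le) auto
  finally show ?thesis
    using integral_heat_kernel_log_weight_swap[OF assms(1) bound \<epsilon>(1), of 2 t x] by simp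
qed

lemma log_heat_average_tendsto:
  fixes \<psi> :: "real^2 \<Rightarrow> real"
  assumes [measurable]: "\<psi> \<in> borel_measurable borel" and bound: "\<And>z. \<bar>\<psi> z\<bar> \<le> M"
    and t: "0 < t" and lim: "((\<lambda>r. heat_semigroup r \<psi> x) \<longlongrightarrow> \<psi> x) (at_right 0)"
  shows "((\<lambda>\<epsilon>. (-1 / ln \<epsilon>) * (\<integral>z. (\<integral>s\<in>{0..t}. 1 / (s + \<epsilon>) *
    heat_kernel ((s + \<epsilon>) / 2) (z - x) * \<psi> z \<partial>lborel) \<partial>lborel)) \<longlongrightarrow> \<psi> x) (at_right 0)"
proof -
  have "filterlim (\<lambda>u::real. u / 2) (at_right 0) (at_right 0)"
    by real_asymp
  with lim have "((\<lambda>u. heat_semigroup (u / 2) \<psi> x) \<longlongrightarrow> \<psi> x) (at_right 0)"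
    by (rule filterlim_compose)
  then have "((\<lambda>\<epsilon>. (-1 / ln \<epsilon>) * (\<integral>s\<in>{0..t}. 1 / (s + \<epsilon>) * heat_semigroup ((s + \<epsilon>) / 2) \<psi> x \<partial>lborel))
      \<longlongrightarrow> \<psi> x) (at_right 0)"
    using bound t by (intro log_weighted_mean_tendsto[where g="\<lambda>u. heat_semigroup (u / 2) \<psi> x"] abs_heat_semigroup_le) auto
  moreover have "\<forall>\<^sub>F \<epsilon> in at_right 0.
      (-1 / ln \<epsilon>) * (\<integral>s\<in>{0..t}. 1 / (s + \<epsilon>) * heat_semigroup ((s + \<epsilon>) / 2) \<psi> x \<partial>lborel)
      = (-1 / ln \<epsilon>) * (\<integral>z. (\<integral>s\<in>{0..t}. 1 / (s + \<epsilon>) * heat_kernel ((s + \<epsilon>) / 2) (z - x) * \<psi> z \<partial>lborel) \<partial>lborel)"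
    using eventually_at_right_less[of 0]
    by eventually_elim (use integral_heat_kernel_log_weight_swap[OF assms(1) bound, of _ 1] in simp)
  ultimately show ?thesis
    by (rule Lim_transform_eventually)
qed

theorem lemma3p15:
  fixes \<psi> :: "real^2 \<Rightarrow> real" and T :: real
  assumes meas: "\<psi> \<in> borel_measurable borel"
    and bdd: "bounded (range \<psi>)"
    and T: "T > 0"
  shows "(\<forall>t. 0 < t \<and> t < T \<longrightarrow>
            (\<exists>C. \<forall>x::real^2. \<forall>\<epsilon>::real. 0 < \<epsilon> \<and> \<epsilon> < 1/2 \<longrightarrow>
               \<bar>(-1 / ln \<epsilon>) * (\<integral>z. (\<integral>s\<in>{0..t}. 1 / (s + \<epsilon>) *
                    heat_kernel ((s + 2 * \<epsilon>) / 2) (z - x) * \<psi> z \<partial>lborel) \<partial>lborel)\<bar> \<le> C))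
       \<and> (\<forall>t. 0 < t \<and> t \<le> T \<longrightarrow>
            (AE x in lborel.
               ((\<lambda>\<epsilon>. (-1 / ln \<epsilon>) * (\<integral>z. (\<integral>s\<in>{0..t}. 1 / (s + \<epsilon>) *
                    heat_kernel ((s + \<epsilon>) / 2) (z - x) * \<psi> z \<partial>lborel) \<partial>lborel))
                \<longlongrightarrow> \<psi> x) (at_right 0)))"
proof -
  obtain M where M: "\<And>z. \<bar>\<psi> z\<bar> \<le> M"
    using bdd unfolding bounded_iff by auto
  show ?thesis
  proof (intro conjI allI impI)
    fix t :: real
    assume "0 < t \<and> t < T"
    then show "\<exists>C. \<forall>x \<epsilon>. 0 < \<epsilon> \<and> \<epsilon> < 1/2 \<longrightarrow> \<bar>(-1 / ln \<epsilon>) * (\<integral>z. (\<integral>s\<in>{0..t}. 1 / (s + \<epsilon>) *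
        heat_kernel ((s + 2 * \<epsilon>) / 2) (z - x) * \<psi> z \<partial>lborel) \<partial>lborel)\<bar> \<le> C"
      using abs_log_heat_average_le[OF meas M] by blast
  next
    fix t :: real
    assume "0 < t \<and> t \<le> T"
    from AE_heat_semigroup_tendsto[OF meas M] show "AE x in lborel.
        ((\<lambda>\<epsilon>. (-1 / ln \<epsilon>) * (\<integral>z. (\<integral>s\<in>{0..t}. 1 / (s + \<epsilon>) *
          heat_kernel ((s + \<epsilon>) / 2) (z - x) * \<psi> z \<partial>lborel) \<partial>lborel)) \<longlongrightarrow> \<psi> x) (at_right 0)"
      by (rule eventually_mono) (rule log_heat_average_tendsto[OF meas M], use \<open>0 < t \<and> t \<le> T\<close> in auto)
  qed
qed

end
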